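(* Let $d$ be a positive integer. Every $312$-avoiding affine permutation in $\widetilde{\mathfrak S}_d$ has a cut point.
   Context: An affine permutation $\pi\in\widetilde{\mathfrak S}_d$ is a bijection $\pi:\mathbb Z\to\mathbb Z$ such that $\pi(i+d)=\pi(i)+d$ for all $i\in\mathbb Z$ and $\sum_{i=0}^{d-1}(\pi(i)-i)=0$. It is $312$-avoiding if there are no integers $i<j<k$ with $\pi(j)<\pi(k)<\pi(i)$. A cut point of $\pi$ is an integer $j$ such that $\pi(i)<\pi(k)$ for all integers $i\le j<k$. *)

theory Defs
  imports Main
begin

definition affine_perm :: "nat \<Rightarrow> (int \<Rightarrow> int) \<Rightarrow> bool" where
  "affine_perm d \<pi> \<longleftrightarrow> bij \<pi> \<and> (\<forall>i. \<pi> (i + int d) = \<pi> i + int d)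
     \<and> (\<Sum>i\<in>{0..<int d}. \<pi> i - i) = 0"

definition avoids_312 :: "(int \<Rightarrow> int) \<Rightarrow> bool" where
  "avoids_312 \<pi> \<longleftrightarrow> \<not> (\<exists>i j k. i < j \<and> j < k \<and> \<pi> j < \<pi> k \<and> \<pi> k < \<pi> i)"

definition cut_point :: "(int \<Rightarrow> int) \<Rightarrow> int \<Rightarrow> bool" where
  "cut_point \<pi> j \<longleftrightarrow> (\<forall>i k. i \<le> j \<and> j < k \<longrightarrow> \<pi> i < \<pi> k)"

end

theory Submission
  imports Defs
begin

text \<open>If \<open>\<pi>(i + d) = \<pi>(i) + d\<close>, then every value of \<open>\<pi>\<close> on \<open>[a, \<infinity>)\<close> lies above a value on
  the window \<open>[a, a + d)\<close>, so \<open>\<pi>\<close> attains a minimum on \<open>[a, \<infinity>)\<close> at some \<open>b\<close>. If \<open>\<pi>\<close> is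
  injective and avoids 312, this \<open>b\<close> is a cut point: a violation \<open>\<pi>(k) < \<pi>(i)\<close> with
  \<open>i < b < k\<close> would give the pattern \<open>\<pi>(b) < \<pi>(k) < \<pi>(i)\<close>.\<close>

lemma periodic_shift:
  assumes "\<And>i. \<pi> (i + int d) = \<pi> i + int d"
  shows "\<pi> (i + int n * int d) = \<pi> i + int n * int d"
proof (induction n)
  case 0
  show ?case by simp
next
  case (Suc n)
  have "\<pi> (i + int (Suc n) * int d) = \<pi> (i + int n * int d + int d)"
    by (simp add: algebra_simps)
  also have "\<dots> = \<pi> (i + int n * int d) + int d"
    by (rule assms)
  also have "\<dots> = \<pi> i + int (Suc n) * int d"
    using Suc.IH by (simp add: algebra_simps)
  finally show ?case .
qed

lemma periodic_min_on_atLeast: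
  fixes \<pi> :: "int \<Rightarrow> int"
  assumes "d \<ge> 1" and "\<And>i. \<pi> (i + int d) = \<pi> i + int d"
  obtains b where "b \<ge> a" and "\<And>k. k \<ge> a \<Longrightarrow> \<pi> b \<le> \<pi> k"
proof -
  let ?W = "{a..<a + int d}"
  obtain b where b: "b \<in> ?W" "\<pi> b = Min (\<pi> ` ?W)"
    using Min_in[of "\<pi> ` ?W"] assms(1) by fastforce
  have "\<pi> b \<le> \<pi> k" if "k \<ge> a" for k
  proof -
    define q where "q = (k - a) div int d"
    define r where "r = (k - a) mod int d"
    have "q \<ge> 0" "a + r \<in> ?W"
      using that assms(1) by (auto simp: q_def r_def pos_imp_zdiv_nonneg_iff)
    have "k = a + r + int (nat q) * int d"
      using \<open>q \<ge> 0\<close> by (simp add: q_def r_def algebra_simps)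
    moreover have "\<pi> (a + r + int (nat q) * int d) = \<pi> (a + r) + int (nat q) * int d"
      using assms(2) by (rule periodic_shift)
    ultimately have "\<pi> k = \<pi> (a + r) + int (nat q) * int d"
      by simp
    moreover have "\<pi> b \<le> \<pi> (a + r)"
      using b \<open>a + r \<in> ?W\<close> by simp
    ultimately show ?thesis
      using \<open>q \<ge> 0\<close> by (simp add: add_increasing2)
  qed
  with b show thesis using that by auto
qed

lemma cut_point_at_suffix_min:
  assumes "avoids_312 \<pi>" and "inj \<pi>" and "\<And>k. k > b \<Longrightarrow> \<pi> b \<le> \<pi> k"
  shows "cut_point \<pi> b"
  unfolding cut_point_def
proof (intro allI impI)
  fix i k assume ik: "i \<le> b \<and> b < k"
  have "\<pi> b < \<pi> k"
    using assms(2,3) ik by (metis inj_eq less_irrefl order_le_neq_trans)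
  show "\<pi> i < \<pi> k"
  proof (rule ccontr)
    assume "\<not> \<pi> i < \<pi> k"
    moreover have "\<pi> i \<noteq> \<pi> k"
      using assms(2) ik by (metis inj_eq less_irrefl order.strict_trans2)
    ultimately have "\<pi> k < \<pi> i" by linarith
    then have "i \<noteq> b" using \<open>\<pi> b < \<pi> k\<close> by auto
    with ik have "i < b" by simp
    then show False
      using assms(1) ik \<open>\<pi> b < \<pi> k\<close> \<open>\<pi> k < \<pi> i\<close> unfolding avoids_312_def by blast
  qed
qed

theorem corollary4p3:
  fixes d :: nat and \<pi> :: "int \<Rightarrow> int"
  assumes "d \<ge> 1" and "affine_perm d \<pi>" and "avoids_312 \<pi>"
  shows "\<exists>j. cut_point \<pi> j"
proof -
  have periodic: "\<And>i. \<pi> (i + int d) = \<pi> i + int d" and "inj \<pi>"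
    using assms(2) unfolding affine_perm_def bij_def by auto
  obtain b :: int where "b \<ge> 0" and b_min: "\<And>k. k \<ge> 0 \<Longrightarrow> \<pi> b \<le> \<pi> k"
    using periodic_min_on_atLeast[of d \<pi> 0] assms(1) periodic by blast
  have "cut_point \<pi> b"
    using cut_point_at_suffix_min[OF assms(3) \<open>inj \<pi>\<close>] b_min \<open>b \<ge> 0\<close> by simp
  then show ?thesis by blast
qed

end
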